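(* Let $G$ be a connected graph and $G_{\lambda,k}$ a skeleton of it. The natural map $f:G\to G_{\lambda,k}$ is a quasi-isometry if and only if the blocks are uniformly bounded (i.e. there is a uniform bound on their diameters in $G$).
   Context: $d$ is the graph metric. A set $X$ of vertices is $k$-connected if any two of its points are joined by a finite sequence in $X$ with consecutive distances $\le k$. Skeleton $G_{\lambda,k}$ (root $x_0\in V(G)$, scale $\lambda\ge1$, connectivity $k\ge1$): layers $A_{N,\lambda}=\{x: N\lambda<d(x,x_0)\le(N+1)\lambda\}$, $N\in\mathbb Z$; blocks are the maximal $k$-connected subsets of layers; $G_{\lambda,k}$ has a vertex per block and an edge between two blocks iff an edge of $G$ joins a vertex of one to a vertex of the other. The natural map $f$ sends each vertex to its block. $f$ is a quasi-isometry if there are constants $a\ge1,b\ge0$ with $\frac1a d(x,y)-b\le d(f(x),f(y))\le a d(x,y)+b$ and a quasi-isometric embedding in the other direction exists. *)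

theory Defs
  imports Complex_Main
begin

definition walk_in :: "'a set \<Rightarrow> ('a \<Rightarrow> 'a \<Rightarrow> bool) \<Rightarrow> 'a list \<Rightarrow> bool" where
  "walk_in V E p \<longleftrightarrow> p \<noteq> [] \<and> set p \<subseteq> V \<and> (\<forall>i < length p - 1. E (p ! i) (p ! Suc i))"

definition graph :: "'a set \<Rightarrow> ('a \<Rightarrow> 'a \<Rightarrow> bool) \<Rightarrow> bool" where
  "graph V E \<longleftrightarrow> (\<forall>x y. E x y \<longrightarrow> x \<in> V \<and> y \<in> V \<and> E y x \<and> x \<noteq> y)"

definition connected_graph :: "'a set \<Rightarrow> ('a \<Rightarrow> 'a \<Rightarrow> bool) \<Rightarrow> bool" where
  "connected_graph V E \<longleftrightarrow> graph V E \<and>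
     (\<forall>x\<in>V. \<forall>y\<in>V. \<exists>p. walk_in V E p \<and> hd p = x \<and> last p = y)"

definition gdist :: "'a set \<Rightarrow> ('a \<Rightarrow> 'a \<Rightarrow> bool) \<Rightarrow> 'a \<Rightarrow> 'a \<Rightarrow> real" where
  "gdist V E x y = real (LEAST n. \<exists>p. walk_in V E p \<and> hd p = x \<and> last p = y \<and> length p = Suc n)"

definition k_joined :: "('a \<Rightarrow> 'a \<Rightarrow> real) \<Rightarrow> real \<Rightarrow> 'a set \<Rightarrow> 'a \<Rightarrow> 'a \<Rightarrow> bool" where
  "k_joined d k X x y \<longleftrightarrow> (\<exists>p. p \<noteq> [] \<and> set p \<subseteq> X \<and> hd p = x \<and> last p = y \<and>
      (\<forall>i < length p - 1. d (p ! i) (p ! Suc i) \<le> k))"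

definition k_connected :: "('a \<Rightarrow> 'a \<Rightarrow> real) \<Rightarrow> real \<Rightarrow> 'a set \<Rightarrow> bool" where
  "k_connected d k X \<longleftrightarrow> (\<forall>x\<in>X. \<forall>y\<in>X. k_joined d k X x y)"

definition layer :: "'a set \<Rightarrow> ('a \<Rightarrow> 'a \<Rightarrow> bool) \<Rightarrow> 'a \<Rightarrow> real \<Rightarrow> int \<Rightarrow> 'a set" where
  "layer V E x0 lam N = {x \<in> V. real_of_int N * lam < gdist V E x x0 \<and>
                                  gdist V E x x0 \<le> (real_of_int N + 1) * lam}"

definition blocks :: "'a set \<Rightarrow> ('a \<Rightarrow> 'a \<Rightarrow> bool) \<Rightarrow> 'a \<Rightarrow> real \<Rightarrow> real \<Rightarrow> 'a set set" where
  "blocks V E x0 lam k = {B. \<exists>N. B \<noteq> {} \<and> B \<subseteq> layer V E x0 lam N \<and> k_connected (gdist V E) k B \<and>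
      (\<forall>C. B \<subseteq> C \<and> C \<subseteq> layer V E x0 lam N \<and> k_connected (gdist V E) k C \<longrightarrow> C = B)}"

definition skel_edge :: "'a set \<Rightarrow> ('a \<Rightarrow> 'a \<Rightarrow> bool) \<Rightarrow> 'a \<Rightarrow> real \<Rightarrow> real \<Rightarrow> 'a set \<Rightarrow> 'a set \<Rightarrow> bool" where
  "skel_edge V E x0 lam k B C \<longleftrightarrow> B \<in> blocks V E x0 lam k \<and> C \<in> blocks V E x0 lam k \<and> B \<noteq> C \<and>
      (\<exists>x\<in>B. \<exists>y\<in>C. E x y)"

definition skel_map :: "'a set \<Rightarrow> ('a \<Rightarrow> 'a \<Rightarrow> bool) \<Rightarrow> 'a \<Rightarrow> real \<Rightarrow> real \<Rightarrow> 'a \<Rightarrow> 'a set" where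
  "skel_map V E x0 lam k x = (THE B. B \<in> blocks V E x0 lam k \<and> x \<in> B)"

definition qi_embedding ::
  "'a set \<Rightarrow> ('a \<Rightarrow> 'a \<Rightarrow> real) \<Rightarrow> 'b set \<Rightarrow> ('b \<Rightarrow> 'b \<Rightarrow> real) \<Rightarrow> ('a \<Rightarrow> 'b) \<Rightarrow> bool" where
  "qi_embedding X dX Y dY f \<longleftrightarrow> (\<forall>x\<in>X. f x \<in> Y) \<and>
     (\<exists>a b. a \<ge> 1 \<and> b \<ge> 0 \<and> (\<forall>x\<in>X. \<forall>y\<in>X.
        dX x y / a - b \<le> dY (f x) (f y) \<and> dY (f x) (f y) \<le> a * dX x y + b))"

definition quasi_isometry ::
  "'a set \<Rightarrow> ('a \<Rightarrow> 'a \<Rightarrow> real) \<Rightarrow> 'b set \<Rightarrow> ('b \<Rightarrow> 'b \<Rightarrow> real) \<Rightarrow> ('a \<Rightarrow> 'b) \<Rightarrow> bool" where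
  "quasi_isometry X dX Y dY f \<longleftrightarrow> qi_embedding X dX Y dY f \<and> (\<exists>g. qi_embedding Y dY X dX g)"

end

theory Submission
  imports Defs "HOL-Library.Disjoint_Sets"
begin

text \<open>The blocks of a skeleton partition the vertex set, so the skeleton is the quotient graph of
  G by this partition and the natural map sends a vertex to its part. Projecting a walk of G gives a
  walk of the quotient that is no longer, so f is 1-Lipschitz. Conversely, a walk of length m in the
  quotient lifts to a path in G that crosses m edges and passes through m + 1 parts; if every part
  has diameter at most M, this gives d(x, y) \<le> (M + 1) m + M, and picking one point in each part
  yields the quasi-inverse. If f is a quasi-isometry, two points of one part have the same image,
  so the lower bound of f bounds their distance.\<close>

inductive walk_len :: "'a set \<Rightarrow> ('a \<Rightarrow> 'a \<Rightarrow> bool) \<Rightarrow> 'a \<Rightarrow> 'a \<Rightarrow> nat \<Rightarrow> bool"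
  for V E where
  walk_len_refl: "x \<in> V \<Longrightarrow> walk_len V E x x 0"
| walk_len_step: "x \<in> V \<Longrightarrow> E x y \<Longrightarrow> walk_len V E y z n \<Longrightarrow> walk_len V E x z (Suc n)"

lemma walk_in_Cons:
  "walk_in V E (x # p) \<longleftrightarrow> x \<in> V \<and> (p = [] \<or> E x (hd p) \<and> walk_in V E p)"
  by (cases p) (auto simp: walk_in_def All_less_Suc2)

lemma walk_in_imp_walk_len:
  "walk_in V E p \<Longrightarrow> walk_len V E (hd p) (last p) (length p - 1)"
proof (induction p)
  case (Cons x p)
  then show ?case
    by (cases p) (auto simp: walk_in_Cons intro: walk_len.intros)
qed (simp add: walk_in_def)

lemma walk_len_imp_walk_in:
  "walk_len V E x y n \<Longrightarrow> \<exists>p. walk_in V E p \<and> hd p = x \<and> last p = y \<and> length p = Suc n"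
proof (induction rule: walk_len.induct)
  case (walk_len_refl x)
  then show ?case by (intro exI[of _ "[x]"]) (simp add: walk_in_def)
next
  case (walk_len_step x y z n)
  then obtain p where "walk_in V E p" "hd p = y" "last p = z" "length p = Suc n"
    by blast
  with walk_len_step.hyps show ?case
    by (intro exI[of _ "x # p"]) (auto simp: walk_in_Cons)
qed

lemma walk_in_iff_walk_len:
  "(\<exists>p. walk_in V E p \<and> hd p = x \<and> last p = y \<and> length p = Suc n) \<longleftrightarrow> walk_len V E x y n"
  by (metis walk_in_imp_walk_len walk_len_imp_walk_in diff_Suc_1)

lemma reachable_iff_walk_len:
  "(\<exists>p. walk_in V E p \<and> hd p = x \<and> last p = y) \<longleftrightarrow> (\<exists>n. walk_len V E x y n)"
  by (metis walk_in_imp_walk_len walk_len_imp_walk_in)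

lemma gdist_eq_Least: "gdist V E x y = real (LEAST n. walk_len V E x y n)"
  by (simp add: gdist_def walk_in_iff_walk_len)

lemma gdist_le_walk_len: "walk_len V E x y n \<Longrightarrow> gdist V E x y \<le> real n"
  by (simp add: gdist_eq_Least Least_le)

lemma gdist_attained:
  assumes "walk_len V E x y m"
  obtains n where "walk_len V E x y n" "gdist V E x y = real n"
  using LeastI[of "walk_len V E x y", OF assms] by (simp add: gdist_eq_Least)

lemma gdist_nonneg: "gdist V E x y \<ge> 0"
  by (simp add: gdist_eq_Least)

lemma walk_len_endpoints: "walk_len V E x y n \<Longrightarrow> x \<in> V \<and> y \<in> V"
  by (induction rule: walk_len.induct) auto

lemma walk_len_trans:
  "walk_len V E x y m \<Longrightarrow> walk_len V E y z n \<Longrightarrow> walk_len V E x z (m + n)"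
  by (induction arbitrary: z rule: walk_len.induct) (auto intro: walk_len.intros)

lemma walk_len_snoc:
  "walk_len V E x y n \<Longrightarrow> E y z \<Longrightarrow> z \<in> V \<Longrightarrow> walk_len V E x z (Suc n)"
  using walk_len_trans[of V E x y n z 1] walk_len_endpoints by (fastforce intro: walk_len.intros)

lemma walk_len_sym:
  assumes "\<And>a b. a \<in> V \<Longrightarrow> b \<in> V \<Longrightarrow> E a b \<Longrightarrow> E b a"
  shows "walk_len V E x y n \<Longrightarrow> walk_len V E y x n"
proof (induction rule: walk_len.induct)
  case (walk_len_step x y z n)
  then show ?case
    using assms walk_len_endpoints[of V E y z n] by (auto intro: walk_len_snoc)
qed (rule walk_len_refl)

lemma walk_len_mono: "walk_len V E x y n \<Longrightarrow> V \<subseteq> W \<Longrightarrow> walk_len W E x y n"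
  by (induction rule: walk_len.induct) (auto intro: walk_len.intros)

lemma walk_len_within_reach:
  "walk_len V E y z n \<Longrightarrow> walk_len V E x y m \<Longrightarrow> walk_len {w. \<exists>m. walk_len V E x w m} E y z n"
proof (induction arbitrary: m rule: walk_len.induct)
  case (walk_len_refl y)
  then show ?case by (auto intro: walk_len.intros)
next
  case (walk_len_step y y' z n)
  then have "walk_len V E x y' (Suc m)"
    using walk_len_endpoints walk_len_snoc by metis
  with walk_len_step show ?case
    by (blast intro: walk_len.intros)
qed

lemma k_joined_iff_walk_len:
  "k_joined d k X x y \<longleftrightarrow> (\<exists>n. walk_len X (\<lambda>a b. d a b \<le> k) x y n)"
  unfolding k_joined_def reachable_iff_walk_len[symmetric] walk_in_def by blast

lemma k_connected_Un:
  assumes "k_connected d k B" "k_connected d k C" "x \<in> B" "x \<in> C"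
  shows "k_connected d k (B \<union> C)"
  unfolding k_connected_def k_joined_iff_walk_len
proof (intro ballI)
  let ?R = "\<lambda>a b. d a b \<le> k"
  have B: "\<forall>y\<in>B. \<forall>z\<in>B. \<exists>n. walk_len (B \<union> C) ?R y z n"
    using assms(1) unfolding k_connected_def k_joined_iff_walk_len by (meson Un_upper1 walk_len_mono)
  have C: "\<forall>y\<in>C. \<forall>z\<in>C. \<exists>n. walk_len (B \<union> C) ?R y z n"
    using assms(2) unfolding k_connected_def k_joined_iff_walk_len by (meson Un_upper2 walk_len_mono)
  fix y z assume "y \<in> B \<union> C" "z \<in> B \<union> C"
  then show "\<exists>n. walk_len (B \<union> C) ?R y z n"
    using B C assms(3,4) by (meson Un_iff walk_len_trans)
qed

lemma k_component_maximal:
  fixes d :: "'a \<Rightarrow> 'a \<Rightarrow> real" and k :: real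
  assumes "x \<in> X" and sym: "\<And>a b. a \<in> X \<Longrightarrow> b \<in> X \<Longrightarrow> d a b = d b a"
  defines "K \<equiv> {y. k_joined d k X x y}"
  shows "x \<in> K" "K \<subseteq> X" "k_connected d k K"
    and "\<And>C. K \<subseteq> C \<Longrightarrow> C \<subseteq> X \<Longrightarrow> k_connected d k C \<Longrightarrow> C = K"
proof -
  let ?R = "\<lambda>a b. d a b \<le> k"
  have K: "K = {y. \<exists>n. walk_len X ?R x y n}"
    by (simp add: K_def k_joined_iff_walk_len)
  have x: "walk_len X ?R x x 0"
    using assms(1) by (rule walk_len_refl)
  then show "x \<in> K"
    unfolding K by blast
  show "K \<subseteq> X"
    unfolding K using walk_len_endpoints by fast
  show "k_connected d k K"
    unfolding k_connected_def k_joined_iff_walk_len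
  proof (intro ballI)
    fix y z assume "y \<in> K" "z \<in> K"
    then obtain m n where "walk_len K ?R x y m" "walk_len K ?R x z n"
      unfolding K using walk_len_within_reach[OF _ x] by blast
    moreover have "walk_len K ?R y x m"
      using walk_len_sym[OF _ \<open>walk_len K ?R x y m\<close>] sym \<open>K \<subseteq> X\<close> by force
    ultimately show "\<exists>n. walk_len K ?R y z n"
      by (blast intro: walk_len_trans)
  qed
  fix C assume C: "K \<subseteq> C" "C \<subseteq> X" "k_connected d k C"
  have "C \<subseteq> K"
  proof
    fix y assume "y \<in> C"
    with C \<open>x \<in> K\<close> obtain n where "walk_len C ?R x y n"
      unfolding k_connected_def k_joined_iff_walk_len by blast
    from walk_len_mono[OF this C(2)] show "y \<in> K"
      unfolding K by blast
  qed
  with C(1) show "C = K" by blast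
qed

context
  fixes V :: "'a set" and E :: "'a \<Rightarrow> 'a \<Rightarrow> bool"
  assumes G: "connected_graph V E"
begin

lemma connected_graph_walk_len:
  assumes "x \<in> V" "y \<in> V"
  obtains n where "walk_len V E x y n"
  using G assms by (auto simp: connected_graph_def reachable_iff_walk_len)

lemma connected_graph_gdist_walk_len:
  assumes "x \<in> V" "y \<in> V"
  obtains n where "walk_len V E x y n" "gdist V E x y = real n"
  using connected_graph_walk_len[OF assms] gdist_attained by metis

lemma connected_graph_sym: "E x y \<Longrightarrow> E y x"
  using G by (simp add: connected_graph_def graph_def)

lemma gdist_sym:
  assumes "x \<in> V" "y \<in> V"
  shows "gdist V E x y = gdist V E y x"
proof -
  have "gdist V E y x \<le> gdist V E x y" if xy: "x \<in> V" "y \<in> V" for x y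
  proof -
    obtain n where n: "walk_len V E x y n" "gdist V E x y = real n"
      using connected_graph_gdist_walk_len[OF xy] by metis
    have "walk_len V E y x n"
      using walk_len_sym[OF connected_graph_sym n(1)] .
    then show ?thesis
      using gdist_le_walk_len n(2) by simp
  qed
  then show ?thesis
    using assms by (simp add: order_antisym)
qed

lemma gdist_triangle:
  assumes "x \<in> V" "y \<in> V" "z \<in> V"
  shows "gdist V E x z \<le> gdist V E x y + gdist V E y z"
proof -
  obtain m n where "walk_len V E x y m" "gdist V E x y = real m"
    and "walk_len V E y z n" "gdist V E y z = real n"
    using connected_graph_gdist_walk_len assms by metis
  then show ?thesis
    using gdist_le_walk_len[OF walk_len_trans] by force
qed

lemma gdist_edge_le_one:
  assumes "E x y"
  shows "gdist V E x y \<le> 1"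
proof -
  have "x \<in> V" "y \<in> V"
    using G assms by (auto simp: connected_graph_def graph_def)
  with assms have "walk_len V E x y 1"
    by (auto intro: walk_len.intros)
  then show ?thesis
    using gdist_le_walk_len by fastforce
qed

end

definition quotient_edge :: "'a set set \<Rightarrow> ('a \<Rightarrow> 'a \<Rightarrow> bool) \<Rightarrow> 'a set \<Rightarrow> 'a set \<Rightarrow> bool" where
  "quotient_edge P E B C \<longleftrightarrow> B \<in> P \<and> C \<in> P \<and> B \<noteq> C \<and> (\<exists>x\<in>B. \<exists>y\<in>C. E x y)"

definition part_of :: "'a set set \<Rightarrow> 'a \<Rightarrow> 'a set" where
  "part_of P x = (THE B. B \<in> P \<and> x \<in> B)"

lemma qi_embeddingI:
  fixes a b :: real
  assumes "\<And>x. x \<in> X \<Longrightarrow> f x \<in> Y" and "a \<ge> 1" "b \<ge> 0"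
    and lower: "\<And>x y. x \<in> X \<Longrightarrow> y \<in> X \<Longrightarrow> dX x y \<le> a * dY (f x) (f y) + b"
    and upper: "\<And>x y. x \<in> X \<Longrightarrow> y \<in> X \<Longrightarrow> dY (f x) (f y) \<le> a * dX x y + b"
  shows "qi_embedding X dX Y dY f"
proof -
  have "dX x y / a - b \<le> dY (f x) (f y)" if "x \<in> X" "y \<in> X" for x y
  proof -
    have "dX x y / a \<le> (a * dY (f x) (f y) + b) / a"
      using lower[OF that] \<open>a \<ge> 1\<close> by (simp add: divide_right_mono)
    also have "\<dots> = dY (f x) (f y) + b / a"
      using \<open>a \<ge> 1\<close> by (simp add: add_divide_distrib)
    also have "b / a \<le> b"
      using \<open>a \<ge> 1\<close> \<open>b \<ge> 0\<close> by (simp add: divide_le_eq mult_le_cancel_left1)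
    finally show ?thesis by simp
  qed
  with assms show ?thesis
    unfolding qi_embedding_def by blast
qed

context
  fixes V :: "'a set" and P :: "'a set set"
  assumes P: "partition_on V P"
begin

lemma part_of_eq:
  assumes "B \<in> P" "x \<in> B"
  shows "part_of P x = B"
  unfolding part_of_def
proof (rule the_equality)
  show "B \<in> P \<and> x \<in> B"
    using assms ..
  fix C assume "C \<in> P \<and> x \<in> C"
  then show "C = B"
    using disjointD[OF partition_onD2[OF P]] assms by blast
qed

lemma part_of_mem:
  assumes "x \<in> V"
  shows "part_of P x \<in> P" "x \<in> part_of P x"
proof -
  obtain B where "B \<in> P" "x \<in> B"
    using partition_onD1[OF P] assms by blast
  then show "part_of P x \<in> P" "x \<in> part_of P x"
    using part_of_eq by simp_all
qed

lemma part_subset: "B \<in> P \<Longrightarrow> B \<subseteq> V"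
  using partition_onD1[OF P] by blast

lemma part_nonempty: "B \<in> P \<Longrightarrow> B \<noteq> {}"
  using partition_onD3[OF P] by blast

lemma walk_len_quotient:
  "walk_len V E x y n \<Longrightarrow> \<exists>m\<le>n. walk_len P (quotient_edge P E) (part_of P x) (part_of P y) m"
proof (induction rule: walk_len.induct)
  case (walk_len_refl x)
  have "walk_len P (quotient_edge P E) (part_of P x) (part_of P x) 0"
    using walk_len.walk_len_refl part_of_mem(1)[OF walk_len_refl] .
  then show ?case
    by blast
next
  case (walk_len_step x y z n)
  then obtain m where m: "m \<le> n" "walk_len P (quotient_edge P E) (part_of P y) (part_of P z) m"
    by blast
  show ?case
  proof (cases "part_of P x = part_of P y")
    case True
    with m show ?thesis
      by (intro exI[of _ m]) auto
  next
    case False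
    have "y \<in> V"
      using walk_len_endpoints[OF walk_len_step.hyps(3)] by simp
    then have "quotient_edge P E (part_of P x) (part_of P y)"
      unfolding quotient_edge_def
      using False walk_len_step.hyps(1,2) part_of_mem by blast
    from walk_len.walk_len_step[OF part_of_mem(1)[OF walk_len_step.hyps(1)] this m(2)] m(1)
    show ?thesis
      by (intro exI[of _ "Suc m"]) simp
  qed
qed

end

context
  fixes V :: "'a set" and E :: "'a \<Rightarrow> 'a \<Rightarrow> bool" and P :: "'a set set"
  assumes G: "connected_graph V E" and P: "partition_on V P"
begin

lemma gdist_quotient_le:
  assumes "x \<in> V" "y \<in> V"
  shows "gdist P (quotient_edge P E) (part_of P x) (part_of P y) \<le> gdist V E x y"
proof -
  obtain n where n: "walk_len V E x y n" "gdist V E x y = real n"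
    using connected_graph_gdist_walk_len[OF G assms] by metis
  then obtain m where "m \<le> n" "walk_len P (quotient_edge P E) (part_of P x) (part_of P y) m"
    using walk_len_quotient[OF P] by blast
  with n(2) show ?thesis
    using gdist_le_walk_len by fastforce
qed

lemma quotient_walk_len:
  assumes "B \<in> P" "C \<in> P"
  obtains m where "walk_len P (quotient_edge P E) B C m"
proof -
  obtain x y where xy: "x \<in> B" "y \<in> C"
    using part_nonempty[OF P] assms by blast
  then have "x \<in> V" "y \<in> V"
    using part_subset[OF P] assms by auto
  then obtain n where "walk_len V E x y n"
    by (rule connected_graph_walk_len[OF G])
  then obtain m where "walk_len P (quotient_edge P E) (part_of P x) (part_of P y) m"
    using walk_len_quotient[OF P] by blast
  moreover have "part_of P x = B" "part_of P y = C"
    using part_of_eq[OF P] assms xy by auto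
  ultimately show thesis
    using that by simp
qed

lemma gdist_le_walk_len_quotient:
  assumes bounded: "\<forall>B\<in>P. \<forall>x\<in>B. \<forall>y\<in>B. gdist V E x y \<le> M"
  shows "walk_len P (quotient_edge P E) B C m \<Longrightarrow> x \<in> B \<Longrightarrow> y \<in> C
    \<Longrightarrow> gdist V E x y \<le> (M + 1) * real m + M"
proof (induction arbitrary: x rule: walk_len.induct)
  case (walk_len_refl B)
  then show ?case
    using bounded by auto
next
  case (walk_len_step B B' C m)
  obtain u v where uv: "u \<in> B" "v \<in> B'" "E u v"
    using walk_len_step.hyps(2) unfolding quotient_edge_def by blast
  have "B' \<in> P" "C \<in> P"
    using walk_len_step.hyps(2) walk_len_endpoints[OF walk_len_step.hyps(3)]
    unfolding quotient_edge_def by auto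
  then have V: "x \<in> V" "u \<in> V" "v \<in> V" "y \<in> V"
    using part_subset[OF P] walk_len_step uv by blast+
  have "gdist V E x y \<le> gdist V E x u + gdist V E u y"
    using gdist_triangle[OF G V(1,2,4)] .
  moreover have "gdist V E u y \<le> gdist V E u v + gdist V E v y"
    using gdist_triangle[OF G V(2,3,4)] .
  moreover have "gdist V E x u \<le> M"
    using bounded walk_len_step.hyps(1) walk_len_step.prems(1) uv(1) by blast
  moreover have "gdist V E u v \<le> 1"
    using gdist_edge_le_one[OF G uv(3)] .
  moreover have "gdist V E v y \<le> (M + 1) * real m + M"
    using walk_len_step.IH uv(2) walk_len_step.prems(2) .
  ultimately show ?case
    by (simp add: algebra_simps)
qed

lemma gdist_le_gdist_quotient:
  assumes "\<forall>B\<in>P. \<forall>x\<in>B. \<forall>y\<in>B. gdist V E x y \<le> M"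
    and "B \<in> P" "C \<in> P" "x \<in> B" "y \<in> C"
  shows "gdist V E x y \<le> (M + 1) * gdist P (quotient_edge P E) B C + M"
proof -
  obtain m where "walk_len P (quotient_edge P E) B C m"
    using quotient_walk_len assms(2,3) by blast
  then obtain n where "walk_len P (quotient_edge P E) B C n"
    and "gdist P (quotient_edge P E) B C = real n"
    by (rule gdist_attained)
  with gdist_le_walk_len_quotient[OF assms(1)] assms(4,5) show ?thesis
    by simp
qed

lemma bounded_parts_if_qi_embedding:
  assumes "qi_embedding V (gdist V E) P (gdist P (quotient_edge P E)) (part_of P)"
  shows "\<exists>M. \<forall>B\<in>P. \<forall>x\<in>B. \<forall>y\<in>B. gdist V E x y \<le> M"
proof -
  obtain a b where a: "a \<ge> 1" and lower: "\<forall>x\<in>V. \<forall>y\<in>V.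
      gdist V E x y / a - b \<le> gdist P (quotient_edge P E) (part_of P x) (part_of P y)"
    using assms unfolding qi_embedding_def by blast
  have "gdist V E x y \<le> a * b" if "B \<in> P" "x \<in> B" "y \<in> B" for B x y
  proof -
    have "part_of P x = B" "part_of P y = B" "x \<in> V" "y \<in> V"
      using part_of_eq[OF P] part_subset[OF P] that by auto
    moreover have "gdist P (quotient_edge P E) B B \<le> 0"
      using gdist_le_walk_len[OF walk_len_refl[OF \<open>B \<in> P\<close>]] by simp
    ultimately have "gdist V E x y / a \<le> b"
      using lower by fastforce
    then show ?thesis
      using a by (simp add: pos_divide_le_eq mult.commute)
  qed
  then show ?thesis
    by blast
qed

lemma quasi_isometry_if_bounded_parts:
  assumes M: "M \<ge> 0" and bounded: "\<forall>B\<in>P. \<forall>x\<in>B. \<forall>y\<in>B. gdist V E x y \<le> M"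
  shows "quasi_isometry V (gdist V E) P (gdist P (quotient_edge P E)) (part_of P)"
proof -
  let ?dQ = "gdist P (quotient_edge P E)"
  have affine: "t \<le> (M + 1) * s + M" if "t \<le> s" "s \<ge> 0" for s t :: real
    using that M mult_nonneg_nonneg[OF M \<open>s \<ge> 0\<close>] unfolding distrib_right by linarith
  have f: "qi_embedding V (gdist V E) P ?dQ (part_of P)"
  proof (rule qi_embeddingI[where a = "M + 1" and b = M])
    show "part_of P x \<in> P" if "x \<in> V" for x
      using part_of_mem(1)[OF P that] .
    show "M + 1 \<ge> 1" "M \<ge> 0"
      using M by simp_all
    fix x y assume xy: "x \<in> V" "y \<in> V"
    show "gdist V E x y \<le> (M + 1) * ?dQ (part_of P x) (part_of P y) + M"
      using gdist_le_gdist_quotient[OF bounded part_of_mem(1)[OF P xy(1)] part_of_mem(1)[OF P xy(2)]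
          part_of_mem(2)[OF P xy(1)] part_of_mem(2)[OF P xy(2)]] .
    show "?dQ (part_of P x) (part_of P y) \<le> (M + 1) * gdist V E x y + M"
      using affine[OF gdist_quotient_le[OF xy] gdist_nonneg] .
  qed
  define g where "g B = (SOME x. x \<in> B)" for B :: "'a set"
  have g: "g B \<in> B" if "B \<in> P" for B
    using part_nonempty[OF P that] unfolding g_def by (simp add: some_in_eq)
  then have gV: "g B \<in> V" if "B \<in> P" for B
    using part_subset[OF P that] that by blast
  have "qi_embedding P ?dQ V (gdist V E) g"
  proof (rule qi_embeddingI[where a = "M + 1" and b = M])
    show "g B \<in> V" if "B \<in> P" for B
      using gV[OF that] .
    show "M + 1 \<ge> 1" "M \<ge> 0"
      using M by simp_all
    fix B C assume BC: "B \<in> P" "C \<in> P"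
    have "?dQ B C \<le> gdist V E (g B) (g C)"
      using gdist_quotient_le[OF gV[OF BC(1)] gV[OF BC(2)]]
      unfolding part_of_eq[OF P BC(1) g[OF BC(1)]] part_of_eq[OF P BC(2) g[OF BC(2)]] .
    then show "?dQ B C \<le> (M + 1) * gdist V E (g B) (g C) + M"
      by (rule affine[OF _ gdist_nonneg])
    show "gdist V E (g B) (g C) \<le> (M + 1) * ?dQ B C + M"
      using gdist_le_gdist_quotient[OF bounded BC g[OF BC(1)] g[OF BC(2)]] .
  qed
  with f show ?thesis
    unfolding quasi_isometry_def by blast
qed

theorem quasi_isometry_part_of_iff_bounded_parts:
  "quasi_isometry V (gdist V E) P (gdist P (quotient_edge P E)) (part_of P)
    \<longleftrightarrow> (\<exists>M. \<forall>B\<in>P. \<forall>x\<in>B. \<forall>y\<in>B. gdist V E x y \<le> M)"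
proof
  assume "\<exists>M. \<forall>B\<in>P. \<forall>x\<in>B. \<forall>y\<in>B. gdist V E x y \<le> M"
  then obtain M where "\<forall>B\<in>P. \<forall>x\<in>B. \<forall>y\<in>B. gdist V E x y \<le> max M 0"
    by (meson max.coboundedI1)
  then show "quasi_isometry V (gdist V E) P (gdist P (quotient_edge P E)) (part_of P)"
    by (rule quasi_isometry_if_bounded_parts[rotated]) simp
qed (use bounded_parts_if_qi_embedding in \<open>auto simp: quasi_isometry_def\<close>)

end

lemma layer_unique:
  assumes "lam \<ge> 0" "x \<in> layer V E x0 lam N" "x \<in> layer V E x0 lam N'"
  shows "N = N'"
proof -
  have False if "x \<in> layer V E x0 lam A" "x \<in> layer V E x0 lam B" "A < B" for A B
  proof -
    have "(real_of_int A + 1) * lam \<le> real_of_int B * lam"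
      using \<open>A < B\<close> \<open>lam \<ge> 0\<close> by (intro mult_right_mono) linarith+
    then show False
      using that(1,2) by (auto simp: layer_def)
  qed
  with assms(2,3) show ?thesis
    by (cases N N' rule: linorder_cases) auto
qed

lemma layer_exists:
  assumes "lam > 0" "x \<in> V"
  shows "x \<in> layer V E x0 lam (\<lceil>gdist V E x x0 / lam\<rceil> - 1)"
proof -
  let ?d = "gdist V E x x0"
  let ?t = "?d / lam"
  have "(of_int \<lceil>?t\<rceil> - 1) * lam < ?t * lam"
    using assms(1) by (intro mult_strict_right_mono) linarith+
  moreover have "?t * lam \<le> of_int \<lceil>?t\<rceil> * lam"
    using assms(1) by (intro mult_right_mono) linarith+
  moreover have "?t * lam = ?d"
    using assms(1) by simp
  ultimately show ?thesis
    using assms(2) by (simp add: layer_def)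
qed

lemma block_unique:
  assumes "lam \<ge> 0" "B \<in> blocks V E x0 lam k" "C \<in> blocks V E x0 lam k" "x \<in> B" "x \<in> C"
  shows "B = C"
proof -
  obtain N where N: "B \<subseteq> layer V E x0 lam N" "k_connected (gdist V E) k B"
    "\<forall>D. B \<subseteq> D \<and> D \<subseteq> layer V E x0 lam N \<and> k_connected (gdist V E) k D \<longrightarrow> D = B"
    using assms(2) unfolding blocks_def by blast
  obtain N' where N': "C \<subseteq> layer V E x0 lam N'" "k_connected (gdist V E) k C"
    "\<forall>D. C \<subseteq> D \<and> D \<subseteq> layer V E x0 lam N' \<and> k_connected (gdist V E) k D \<longrightarrow> D = C"
    using assms(3) unfolding blocks_def by blast
  have "x \<in> layer V E x0 lam N" "x \<in> layer V E x0 lam N'"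
    using N(1) N'(1) assms(4,5) by auto
  then have "N = N'"
    by (rule layer_unique[OF assms(1)])
  have kc: "k_connected (gdist V E) k (B \<union> C)"
    using k_connected_Un[OF N(2) N'(2) assms(4,5)] .
  have sub: "B \<union> C \<subseteq> layer V E x0 lam N'"
    using N(1) N'(1) \<open>N = N'\<close> by simp
  have "B \<union> C = B"
    by (rule N(3)[rule_format]) (use sub kc \<open>N = N'\<close> in simp)
  moreover have "B \<union> C = C"
    by (rule N'(3)[rule_format]) (use sub kc in simp)
  ultimately show ?thesis
    by metis
qed

lemma block_exists:
  assumes "connected_graph V E" "lam > 0" "x \<in> V"
  shows "\<exists>B\<in>blocks V E x0 lam k. x \<in> B"
proof -
  define N where "N = \<lceil>gdist V E x x0 / lam\<rceil> - 1"
  have x: "x \<in> layer V E x0 lam N"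
    unfolding N_def using layer_exists assms(2,3) .
  have sym: "gdist V E a b = gdist V E b a" if "a \<in> layer V E x0 lam N" "b \<in> layer V E x0 lam N" for a b
    using gdist_sym[OF assms(1)] that by (simp add: layer_def)
  define K where "K = {y. k_joined (gdist V E) k (layer V E x0 lam N) x y}"
  note K = k_component_maximal[of x "layer V E x0 lam N" "gdist V E" k, OF x sym, folded K_def]
  have "K \<in> blocks V E x0 lam k"
    unfolding blocks_def using K by (intro CollectI exI[of _ N] conjI allI impI) auto
  with K(1) show ?thesis
    by blast
qed

lemma partition_on_blocks:
  assumes "connected_graph V E" "lam > 0"
  shows "partition_on V (blocks V E x0 lam k)"
proof (rule partition_onI)
  have "B \<subseteq> V" if "B \<in> blocks V E x0 lam k" for B
    using that unfolding blocks_def layer_def by blast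
  then show "\<Union> (blocks V E x0 lam k) = V"
    using block_exists[OF assms] by blast
  show "disjnt B C" if "B \<in> blocks V E x0 lam k" "C \<in> blocks V E x0 lam k" "B \<noteq> C" for B C
    using block_unique[OF _ that(1,2)] assms(2) that(3) unfolding disjnt_def by force
  show "{} \<notin> blocks V E x0 lam k"
    by (simp add: blocks_def)
qed

lemma skel_edge_eq_quotient_edge: "skel_edge V E x0 lam k = quotient_edge (blocks V E x0 lam k) E"
  by (simp add: fun_eq_iff skel_edge_def quotient_edge_def)

lemma skel_map_eq_part_of: "skel_map V E x0 lam k = part_of (blocks V E x0 lam k)"
  by (simp add: fun_eq_iff skel_map_def part_of_def)

theorem lemma3:
  fixes V :: "'a set" and E :: "'a \<Rightarrow> 'a \<Rightarrow> bool" and x0 :: 'a and lam k :: real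
  assumes "connected_graph V E" and "x0 \<in> V" and "lam \<ge> 1" and "k \<ge> 1"
  shows "quasi_isometry V (gdist V E)
            (blocks V E x0 lam k) (gdist (blocks V E x0 lam k) (skel_edge V E x0 lam k))
            (skel_map V E x0 lam k)
         \<longleftrightarrow> (\<exists>M. \<forall>B\<in>blocks V E x0 lam k. \<forall>x\<in>B. \<forall>y\<in>B. gdist V E x y \<le> M)"
proof -
  have "partition_on V (blocks V E x0 lam k)"
    using partition_on_blocks[OF assms(1)] assms(3) by simp
  then show ?thesis
    unfolding skel_edge_eq_quotient_edge skel_map_eq_part_of
    by (rule quasi_isometry_part_of_iff_bounded_parts[OF assms(1)])
qed

end
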